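(* A uniform preorder $(A,R)$ is cartesian if and only if there exist a function $\wedge:A\times A\to A$ and an element $\top\in A$ such that the relations $$\tau=\{(a,\top)\mid a\in A\},\quad \lambda=\{(a\wedge b,a)\mid a,b\in A\},\quad \rho=\{(a\wedge b,b)\mid a,b\in A\}$$ are in $R$, and for all $r,s\in R$ the relation $\langle\!\langle r,s\rangle\!\rangle=\{(a,b\wedge c)\mid (a,b)\in r,(a,c)\in s\}$ is in $R$.
   Context: A uniform preorder is a pair $(A,R)$ with $A$ a set and $R\subseteq P(A\times A)$ such that $\mathrm{id}_A\in R$, $s\circ r\in R$ whenever $r,s\in R$, and $s\in R$ whenever $r\in R$ and $s\subseteq r$. A monotone map $f:(A,R)\to(B,S)$ is a function $f:A\to B$ with $\{(fa,fa')\mid (a,a')\in r\}\in S$ for all $r\in R$; for monotone $f,g$, $f\le g$ iff $\{(fa,ga)\mid a\in A\}\in S$. These form a locally ordered category $\mathsf{UOrd}$, in which an adjunction $f\dashv g$ ($f:X\to Y$, $g:Y\to X$) means $\mathrm{id}_X\le g\circ f$ and $f\circ g\le\mathrm{id}_Y$. $\mathsf{UOrd}$ has finite 2-products: the terminal object is a singleton set with its unique uniform preorder structure, and the product of $(A,R)$ and $(B,S)$ is $(A\times B,R\otimes S)$ where $R\otimes S$ consists of all relations contained in some $r\times s=\{((a,b),(a',b'))\mid (a,a')\in r,(b,b')\in s\}$ with $r\in R,s\in S$. A uniform preorder $(A,R)$ is cartesian if the terminal projection $(A,R)\to 1$ and the diagonal $(A,R)\to(A,R)\times(A,R)$ have right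 adjoints in $\mathsf{UOrd}$. *)

theory Defs
  imports Main
begin

definition uniform_preorder :: "'a set \<Rightarrow> ('a \<times> 'a) set set \<Rightarrow> bool" where
  "uniform_preorder A R \<longleftrightarrow>
     R \<subseteq> Pow (A \<times> A) \<and>
     Id_on A \<in> R \<and>
     (\<forall>r\<in>R. \<forall>s\<in>R. r O s \<in> R) \<and>
     (\<forall>r\<in>R. \<forall>s. s \<subseteq> r \<longrightarrow> s \<in> R)"

text \<open>Note: the composite s \<circ> r (first r, then s) is the relational composition r O s.\<close>

definition rel_image :: "('a \<Rightarrow> 'b) \<Rightarrow> ('a \<times> 'a) set \<Rightarrow> ('b \<times> 'b) set" where
  "rel_image f r = {(f a, f a') | a a'. (a, a') \<in> r}"

definition monotone_map ::
  "'a set \<Rightarrow> ('a \<times> 'a) set set \<Rightarrow> 'b set \<Rightarrow> ('b \<times> 'b) set set \<Rightarrow> ('a \<Rightarrow> 'b) \<Rightarrow> bool" where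
  "monotone_map A R B S f \<longleftrightarrow> f ` A \<subseteq> B \<and> (\<forall>r\<in>R. rel_image f r \<in> S)"

definition map_le :: "'a set \<Rightarrow> ('b \<times> 'b) set set \<Rightarrow> ('a \<Rightarrow> 'b) \<Rightarrow> ('a \<Rightarrow> 'b) \<Rightarrow> bool" where
  "map_le A S f g \<longleftrightarrow> {(f a, g a) | a. a \<in> A} \<in> S"

definition uord_adjunction ::
  "'a set \<Rightarrow> ('a \<times> 'a) set set \<Rightarrow> 'b set \<Rightarrow> ('b \<times> 'b) set set \<Rightarrow> ('a \<Rightarrow> 'b) \<Rightarrow> ('b \<Rightarrow> 'a) \<Rightarrow> bool" where
  "uord_adjunction A R B S f g \<longleftrightarrow>
     monotone_map A R B S f \<and> monotone_map B S A R g \<and>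
     map_le A R id (g \<circ> f) \<and> map_le B S (f \<circ> g) id"

definition term_carrier :: "unit set" where "term_carrier = {()}"
definition term_rels :: "(unit \<times> unit) set set" where "term_rels = Pow (term_carrier \<times> term_carrier)"

definition rel_prod :: "('a \<times> 'a) set \<Rightarrow> ('b \<times> 'b) set \<Rightarrow> (('a \<times> 'b) \<times> ('a \<times> 'b)) set" where
  "rel_prod r s = {((a, b), (a', b')) | a a' b b'. (a, a') \<in> r \<and> (b, b') \<in> s}"

definition prod_rels :: "('a \<times> 'a) set set \<Rightarrow> ('b \<times> 'b) set set \<Rightarrow> (('a \<times> 'b) \<times> ('a \<times> 'b)) set set" where
  "prod_rels R S = {t. \<exists>r\<in>R. \<exists>s\<in>S. t \<subseteq> rel_prod r s}"

definition cartesian_up :: "'a set \<Rightarrow> ('a \<times> 'a) set set \<Rightarrow> bool" where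
  "cartesian_up A R \<longleftrightarrow>
     (\<exists>t :: unit \<Rightarrow> 'a. uord_adjunction A R term_carrier term_rels (\<lambda>_. ()) t) \<and>
     (\<exists>m :: 'a \<times> 'a \<Rightarrow> 'a. uord_adjunction A R (A \<times> A) (prod_rels R R) (\<lambda>a. (a, a)) m)"

end

theory Submission
  imports Defs
begin

text \<open>A right adjoint of the terminal projection picks an element \<open>\<top>\<close>, and the unit of the
  adjunction is exactly the relation \<open>\<tau>\<close>. A right adjoint \<open>m\<close> of the diagonal is a binary
  operation \<open>\<wedge>\<close>: the counit says that \<open>\<lambda>\<close> and \<open>\<rho>\<close> are in \<open>R\<close>, and the unit says that
  \<open>a \<le> a \<wedge> a\<close>. Given these, monotonicity of \<open>m\<close> on product relations is equivalent to the
  pairing condition: \<open>\<langle>\<langle>r,s\<rangle>\<rangle>\<close> is contained in the unit followed by the image of \<open>r \<times> s\<close>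
  under \<open>m\<close>, and conversely that image is contained in \<open>\<langle>\<langle>\<lambda> O r, \<rho> O s\<rangle>\<rangle>\<close>.\<close>

definition pairing_rel ::
  "('b \<Rightarrow> 'c \<Rightarrow> 'd) \<Rightarrow> ('a \<times> 'b) set \<Rightarrow> ('a \<times> 'c) set \<Rightarrow> ('a \<times> 'd) set" where
  "pairing_rel meet r s = {(a, meet b c) | a b c. (a, b) \<in> r \<and> (a, c) \<in> s}"

definition meet_fst_rel :: "'a set \<Rightarrow> ('a \<Rightarrow> 'a \<Rightarrow> 'a) \<Rightarrow> ('a \<times> 'a) set" where
  "meet_fst_rel A meet = {(meet a b, a) | a b. a \<in> A \<and> b \<in> A}"

definition meet_snd_rel :: "'a set \<Rightarrow> ('a \<Rightarrow> 'a \<Rightarrow> 'a) \<Rightarrow> ('a \<times> 'a) set" where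
  "meet_snd_rel A meet = {(meet a b, b) | a b. a \<in> A \<and> b \<in> A}"

definition uniform_top :: "'a set \<Rightarrow> ('a \<times> 'a) set set \<Rightarrow> 'a \<Rightarrow> bool" where
  "uniform_top A R e \<longleftrightarrow> e \<in> A \<and> {(a, e) | a. a \<in> A} \<in> R"

definition uniform_meet :: "'a set \<Rightarrow> ('a \<times> 'a) set set \<Rightarrow> ('a \<Rightarrow> 'a \<Rightarrow> 'a) \<Rightarrow> bool" where
  "uniform_meet A R meet \<longleftrightarrow>
     (\<forall>a\<in>A. \<forall>b\<in>A. meet a b \<in> A) \<and> meet_fst_rel A meet \<in> R \<and> meet_snd_rel A meet \<in> R \<and>
     (\<forall>r\<in>R. \<forall>s\<in>R. pairing_rel meet r s \<in> R)"

lemma uniform_preorder_subset: "uniform_preorder A R \<Longrightarrow> r \<in> R \<Longrightarrow> r \<subseteq> A \<times> A"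
  unfolding uniform_preorder_def by auto

lemma uniform_preorder_Id_on: "uniform_preorder A R \<Longrightarrow> Id_on A \<in> R"
  unfolding uniform_preorder_def by auto

lemma uniform_preorder_relcomp: "uniform_preorder A R \<Longrightarrow> r \<in> R \<Longrightarrow> s \<in> R \<Longrightarrow> r O s \<in> R"
  unfolding uniform_preorder_def by auto

lemma uniform_preorder_downward_closed:
  "uniform_preorder A R \<Longrightarrow> r \<in> R \<Longrightarrow> s \<subseteq> r \<Longrightarrow> s \<in> R"
  unfolding uniform_preorder_def by auto

lemma terminal_right_adjoint_iff:
  assumes "uniform_preorder A R"
  shows "uord_adjunction A R term_carrier term_rels (\<lambda>_. ()) t \<longleftrightarrow> uniform_top A R (t ())"
proof
  assume "uord_adjunction A R term_carrier term_rels (\<lambda>_. ()) t"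
  then show "uniform_top A R (t ())"
    unfolding uord_adjunction_def monotone_map_def map_le_def term_carrier_def uniform_top_def
    by auto
next
  assume "uniform_top A R (t ())"
  then have top: "t () \<in> A \<and> {(a, t ()) | a. a \<in> A} \<in> R"
    unfolding uniform_top_def .
  have "monotone_map term_carrier term_rels A R t"
    unfolding monotone_map_def
  proof (intro conjI ballI)
    show "t ` term_carrier \<subseteq> A"
      using top unfolding term_carrier_def by simp
    fix r assume "r \<in> term_rels"
    have "rel_image t r \<subseteq> {(a, t ()) | a. a \<in> A}"
      using top unfolding rel_image_def by auto
    with top show "rel_image t r \<in> R"
      by (blast intro: uniform_preorder_downward_closed[OF assms])
  qed
  with top show "uord_adjunction A R term_carrier term_rels (\<lambda>_. ()) t"
    unfolding uord_adjunction_def monotone_map_def map_le_def term_rels_def term_carrier_def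
    by auto
qed

lemma monotone_map_diagonal: "monotone_map A R (A \<times> A) (prod_rels R R) (\<lambda>a. (a, a))"
  unfolding monotone_map_def prod_rels_def rel_image_def rel_prod_def by blast

lemma map_le_diagonal_unit_iff:
  "map_le A R id (case_prod meet \<circ> (\<lambda>a. (a, a))) \<longleftrightarrow> {(a, meet a a) | a. a \<in> A} \<in> R"
  unfolding map_le_def by simp

lemma map_le_diagonal_counit_iff:
  assumes "uniform_preorder A R"
  shows "map_le (A \<times> A) (prod_rels R R) ((\<lambda>a. (a, a)) \<circ> case_prod meet) id \<longleftrightarrow>
    meet_fst_rel A meet \<in> R \<and> meet_snd_rel A meet \<in> R"
proof
  assume "map_le (A \<times> A) (prod_rels R R) ((\<lambda>a. (a, a)) \<circ> case_prod meet) id"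
  then obtain r s where "r \<in> R" "s \<in> R"
    and counit: "{((meet a b, meet a b), (a, b)) | a b. a \<in> A \<and> b \<in> A} \<subseteq> rel_prod r s"
    unfolding map_le_def prod_rels_def by fastforce
  from counit have "meet_fst_rel A meet \<subseteq> r" "meet_snd_rel A meet \<subseteq> s"
    unfolding meet_fst_rel_def meet_snd_rel_def rel_prod_def by blast+
  with \<open>r \<in> R\<close> \<open>s \<in> R\<close> show "meet_fst_rel A meet \<in> R \<and> meet_snd_rel A meet \<in> R"
    using uniform_preorder_downward_closed[OF assms] by blast
next
  assume "meet_fst_rel A meet \<in> R \<and> meet_snd_rel A meet \<in> R"
  moreover have "{(((\<lambda>a. (a, a)) \<circ> case_prod meet) p, id p) | p. p \<in> A \<times> A}
      \<subseteq> rel_prod (meet_fst_rel A meet) (meet_snd_rel A meet)"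
    unfolding meet_fst_rel_def meet_snd_rel_def rel_prod_def by fastforce
  ultimately show "map_le (A \<times> A) (prod_rels R R) ((\<lambda>a. (a, a)) \<circ> case_prod meet) id"
    unfolding map_le_def prod_rels_def by blast
qed

lemma pairing_rel_in_if_monotone_meet:
  assumes "uniform_preorder A R"
    and monotone: "monotone_map (A \<times> A) (prod_rels R R) A R (case_prod meet)"
    and unit: "{(a, meet a a) | a. a \<in> A} \<in> R"
    and "r \<in> R" "s \<in> R"
  shows "pairing_rel meet r s \<in> R"
proof -
  have "rel_prod r s \<in> prod_rels R R"
    using \<open>r \<in> R\<close> \<open>s \<in> R\<close> unfolding prod_rels_def by blast
  with monotone have image: "rel_image (case_prod meet) (rel_prod r s) \<in> R"
    unfolding monotone_map_def by blast
  have "pairing_rel meet r s \<subseteq> {(a, meet a a) | a. a \<in> A} O rel_image (case_prod meet) (rel_prod r s)"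
  proof
    fix p assume "p \<in> pairing_rel meet r s"
    then obtain a b c where p: "p = (a, meet b c)" "(a, b) \<in> r" "(a, c) \<in> s"
      unfolding pairing_rel_def by blast
    then have "a \<in> A"
      using uniform_preorder_subset[OF assms(1) \<open>r \<in> R\<close>] by blast
    moreover from p have "(meet a a, meet b c) \<in> rel_image (case_prod meet) (rel_prod r s)"
      unfolding rel_image_def rel_prod_def by fastforce
    ultimately show "p \<in> {(a, meet a a) | a. a \<in> A} O rel_image (case_prod meet) (rel_prod r s)"
      using p(1) by blast
  qed
  with uniform_preorder_relcomp[OF assms(1) unit image] show ?thesis
    by (rule uniform_preorder_downward_closed[OF assms(1)])
qed

lemma monotone_meet_if_pairing_rel_in:
  assumes "uniform_preorder A R"
    and meet_closed: "\<forall>a\<in>A. \<forall>b\<in>A. meet a b \<in> A"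
    and fst: "meet_fst_rel A meet \<in> R" and snd: "meet_snd_rel A meet \<in> R"
    and pairing: "\<forall>r\<in>R. \<forall>s\<in>R. pairing_rel meet r s \<in> R"
  shows "monotone_map (A \<times> A) (prod_rels R R) A R (case_prod meet)"
  unfolding monotone_map_def
proof (intro conjI ballI)
  show "case_prod meet ` (A \<times> A) \<subseteq> A"
    using meet_closed by auto
  fix q assume "q \<in> prod_rels R R"
  then obtain r s where "r \<in> R" "s \<in> R" and q: "q \<subseteq> rel_prod r s"
    unfolding prod_rels_def by blast
  have "rel_image (case_prod meet) q
      \<subseteq> pairing_rel meet (meet_fst_rel A meet O r) (meet_snd_rel A meet O s)"
  proof
    fix p assume "p \<in> rel_image (case_prod meet) q"
    then obtain a b a' b' where p: "p = (meet a b, meet a' b')" "(a, a') \<in> r" "(b, b') \<in> s"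
      using q unfolding rel_image_def rel_prod_def by auto
    moreover have "a \<in> A" "b \<in> A"
      using p(2,3) uniform_preorder_subset[OF assms(1) \<open>r \<in> R\<close>]
        uniform_preorder_subset[OF assms(1) \<open>s \<in> R\<close>] by blast+
    ultimately show "p \<in> pairing_rel meet (meet_fst_rel A meet O r) (meet_snd_rel A meet O s)"
      unfolding pairing_rel_def meet_fst_rel_def meet_snd_rel_def by blast
  qed
  moreover have "pairing_rel meet (meet_fst_rel A meet O r) (meet_snd_rel A meet O s) \<in> R"
    using pairing uniform_preorder_relcomp[OF assms(1) fst \<open>r \<in> R\<close>]
      uniform_preorder_relcomp[OF assms(1) snd \<open>s \<in> R\<close>] by blast
  ultimately show "rel_image (case_prod meet) q \<in> R"
    by (rule uniform_preorder_downward_closed[OF assms(1), rotated])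
qed

lemma diagonal_unit_if_pairing_rel_in:
  assumes "uniform_preorder A R" and "\<forall>r\<in>R. \<forall>s\<in>R. pairing_rel meet r s \<in> R"
  shows "{(a, meet a a) | a. a \<in> A} \<in> R"
proof -
  have "{(a, meet a a) | a. a \<in> A} \<subseteq> pairing_rel meet (Id_on A) (Id_on A)"
    unfolding pairing_rel_def by blast
  moreover have "pairing_rel meet (Id_on A) (Id_on A) \<in> R"
    using assms uniform_preorder_Id_on by blast
  ultimately show ?thesis
    by (rule uniform_preorder_downward_closed[OF assms(1), rotated])
qed

lemma diagonal_right_adjoint_iff:
  assumes "uniform_preorder A R"
  shows "uord_adjunction A R (A \<times> A) (prod_rels R R) (\<lambda>a. (a, a)) (case_prod meet) \<longleftrightarrow>
    uniform_meet A R meet"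
proof
  assume "uord_adjunction A R (A \<times> A) (prod_rels R R) (\<lambda>a. (a, a)) (case_prod meet)"
  then have monotone: "monotone_map (A \<times> A) (prod_rels R R) A R (case_prod meet)"
    and unit: "map_le A R id (case_prod meet \<circ> (\<lambda>a. (a, a)))"
    and counit: "map_le (A \<times> A) (prod_rels R R) ((\<lambda>a. (a, a)) \<circ> case_prod meet) id"
    unfolding uord_adjunction_def by blast+
  from monotone have "\<forall>a\<in>A. \<forall>b\<in>A. meet a b \<in> A"
    unfolding monotone_map_def by auto
  moreover from counit have "meet_fst_rel A meet \<in> R \<and> meet_snd_rel A meet \<in> R"
    using map_le_diagonal_counit_iff[OF assms] by blast
  moreover from unit have "{(a, meet a a) | a. a \<in> A} \<in> R"
    using map_le_diagonal_unit_iff by blast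
  then have "\<forall>r\<in>R. \<forall>s\<in>R. pairing_rel meet r s \<in> R"
    using pairing_rel_in_if_monotone_meet[OF assms monotone] by blast
  ultimately show "uniform_meet A R meet"
    unfolding uniform_meet_def by blast
next
  assume "uniform_meet A R meet"
  then have closed: "\<forall>a\<in>A. \<forall>b\<in>A. meet a b \<in> A"
    and projections: "meet_fst_rel A meet \<in> R \<and> meet_snd_rel A meet \<in> R"
    and pairing: "\<forall>r\<in>R. \<forall>s\<in>R. pairing_rel meet r s \<in> R"
    unfolding uniform_meet_def by blast+
  from pairing have "map_le A R id (case_prod meet \<circ> (\<lambda>a. (a, a)))"
    using map_le_diagonal_unit_iff diagonal_unit_if_pairing_rel_in[OF assms] by blast
  moreover from projections
  have "map_le (A \<times> A) (prod_rels R R) ((\<lambda>a. (a, a)) \<circ> case_prod meet) id"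
    using map_le_diagonal_counit_iff[OF assms] by blast
  moreover from projections have "monotone_map (A \<times> A) (prod_rels R R) A R (case_prod meet)"
    using monotone_meet_if_pairing_rel_in[OF assms closed _ _ pairing] by blast
  ultimately show "uord_adjunction A R (A \<times> A) (prod_rels R R) (\<lambda>a. (a, a)) (case_prod meet)"
    unfolding uord_adjunction_def using monotone_map_diagonal by (intro conjI)
qed

lemma cartesian_up_iff_top_and_meet:
  assumes "uniform_preorder A R"
  shows "cartesian_up A R \<longleftrightarrow> (\<exists>e. uniform_top A R e) \<and> (\<exists>meet. uniform_meet A R meet)"
proof -
  have "(\<exists>t. uord_adjunction A R term_carrier term_rels (\<lambda>_. ()) t) \<longleftrightarrow>
      (\<exists>e. uniform_top A R e)"
  proof
    assume "\<exists>t. uord_adjunction A R term_carrier term_rels (\<lambda>_. ()) t"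
    then show "\<exists>e. uniform_top A R e"
      using terminal_right_adjoint_iff[OF assms] by blast
  next
    assume "\<exists>e. uniform_top A R e"
    then obtain e where "uniform_top A R e" ..
    then have "uord_adjunction A R term_carrier term_rels (\<lambda>_. ()) (\<lambda>_. e)"
      using terminal_right_adjoint_iff[OF assms, of "\<lambda>_. e"] by simp
    then show "\<exists>t. uord_adjunction A R term_carrier term_rels (\<lambda>_. ()) t"
      by (rule exI[where x = "\<lambda>_. e"])
  qed
  moreover have "(\<exists>m. uord_adjunction A R (A \<times> A) (prod_rels R R) (\<lambda>a. (a, a)) m) \<longleftrightarrow>
      (\<exists>meet. uniform_meet A R meet)"
  proof
    assume "\<exists>m. uord_adjunction A R (A \<times> A) (prod_rels R R) (\<lambda>a. (a, a)) m"
    then obtain m where "uord_adjunction A R (A \<times> A) (prod_rels R R) (\<lambda>a. (a, a)) m" ..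
    then have "uord_adjunction A R (A \<times> A) (prod_rels R R) (\<lambda>a. (a, a)) (case_prod (curry m))"
      by simp
    then show "\<exists>meet. uniform_meet A R meet"
      using diagonal_right_adjoint_iff[OF assms] by blast
  next
    assume "\<exists>meet. uniform_meet A R meet"
    then obtain meet where "uniform_meet A R meet" ..
    then have "uord_adjunction A R (A \<times> A) (prod_rels R R) (\<lambda>a. (a, a)) (case_prod meet)"
      using diagonal_right_adjoint_iff[OF assms] by blast
    then show "\<exists>m. uord_adjunction A R (A \<times> A) (prod_rels R R) (\<lambda>a. (a, a)) m"
      by (rule exI[where x = "case_prod meet"])
  qed
  ultimately show ?thesis
    unfolding cartesian_up_def by blast
qed

theorem lemma3p2:
  fixes A :: "'a set" and R :: "('a \<times> 'a) set set"
  assumes "uniform_preorder A R"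
  shows "cartesian_up A R \<longleftrightarrow>
    (\<exists>meet :: 'a \<Rightarrow> 'a \<Rightarrow> 'a. \<exists>top :: 'a.
       top \<in> A \<and> (\<forall>a\<in>A. \<forall>b\<in>A. meet a b \<in> A) \<and>
       {(a, top) | a. a \<in> A} \<in> R \<and>
       {(meet a b, a) | a b. a \<in> A \<and> b \<in> A} \<in> R \<and>
       {(meet a b, b) | a b. a \<in> A \<and> b \<in> A} \<in> R \<and>
       (\<forall>r\<in>R. \<forall>s\<in>R. {(a, meet b c) | a b c. (a, b) \<in> r \<and> (a, c) \<in> s} \<in> R))"
proof -
  have "cartesian_up A R \<longleftrightarrow> (\<exists>meet top. uniform_top A R top \<and> uniform_meet A R meet)"
    using cartesian_up_iff_top_and_meet[OF assms] by blast
  also have "\<dots> \<longleftrightarrow> (\<exists>meet top. top \<in> A \<and> (\<forall>a\<in>A. \<forall>b\<in>A. meet a b \<in> A) \<and>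
      {(a, top) | a. a \<in> A} \<in> R \<and> meet_fst_rel A meet \<in> R \<and> meet_snd_rel A meet \<in> R \<and>
      (\<forall>r\<in>R. \<forall>s\<in>R. pairing_rel meet r s \<in> R))"
    unfolding uniform_top_def uniform_meet_def by blast
  finally show ?thesis
    unfolding meet_fst_rel_def meet_snd_rel_def pairing_rel_def .
qed

end
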